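(* Let $k\ge1$. The T-ideal of $F(\mathfrak B)$ generated by (the element corresponding to) $(y_1z_2-y_2z_1)^k$ contains $(y_1z_1)^k(y_1-z_1)^k$, and hence contains $(y_1z_1)^k(y_1-z_1)^k\,w^{(j)}_\mu$ for every partition $\mu=(\mu_1,\mu_2)$ and every admissible $j$.
   Context: $K$ is a field of characteristic $0$. $\mathfrak B$ is the variety of bicommutative algebras (identities $(x_1x_2)x_3=(x_1x_3)x_2$, $x_1(x_2x_3)=x_2(x_1x_3)$), with free algebra $F(\mathfrak B)$ on $x_1,x_2,\dots$; a T-ideal is a two-sided ideal closed under all endomorphisms. Model: with $K[Y,Z]$ the commutative polynomial ring in $y_1,y_2,\dots,z_1,z_2,\dots$, the algebra $G$ has basis $\{x_i\}\cup\{Y^\alpha Z^\beta:|\alpha|,|\beta|>0\}$ and multiplication $x_ix_j=y_iz_j$, $x_i\cdot(Y^\alpha Z^\beta)=y_iY^\alpha Z^\beta$, $(Y^\alpha Z^\beta)\cdot x_j=Y^\alpha Z^\beta z_j$, $(Y^\alpha Z^\beta)(Y^\gamma Z^\delta)=Y^{\alpha+\gamma}Z^{\beta+\delta}$; it is known that $x_i\mapsto x_i$ gives an isomorphism $F(\mathfrak B)\cong G$, so elements of $F(\mathfrak B)^2$ are polynomials in the $y_i,z_i$ of positive degree in both sets, and the product in $G$ of two such elements is their product as polynomials. The elements $w^{(j)}_\mu$ are $w^{(j)}_{(n)}=y_1^jz_1^{n-j}$ ($1\le j\le n-1$) and, for $\mu_2>0$, $w^{(j)}_\mu=y_1^j(y_1z_2-y_2z_1)^{\mu_2}z_1^{\mu_1-\mu_2-j}$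 ($0\le j\le\mu_1-\mu_2$). *)

theory Defs
  imports Main "HOL-Library.Poly_Mapping"
begin

text \<open>Commutative polynomial ring K[Y,Z]: variables Inl i = y_i, Inr i = z_i.
  Polynomials are finitely supported maps from monomials (exponent vectors) to K.\<close>

type_synonym 'k pol = "((nat + nat) \<Rightarrow>\<^sub>0 nat) \<Rightarrow>\<^sub>0 'k"

definition Yv :: "nat \<Rightarrow> 'k::comm_ring_1 pol" where
  "Yv i = Poly_Mapping.single (Poly_Mapping.single (Inl i) 1) 1"

definition Zv :: "nat \<Rightarrow> 'k::comm_ring_1 pol" where
  "Zv i = Poly_Mapping.single (Poly_Mapping.single (Inr i) 1) 1"

definition constp :: "'k::comm_ring_1 \<Rightarrow> 'k pol" where
  "constp c = Poly_Mapping.single 0 c"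

definition pos_bideg :: "'k::comm_ring_1 pol \<Rightarrow> bool" where
  "pos_bideg p \<longleftrightarrow> (\<forall>m \<in> Poly_Mapping.keys p. (\<exists>i. 0 < Poly_Mapping.lookup m (Inl i)) \<and> (\<exists>i. 0 < Poly_Mapping.lookup m (Inr i)))"

text \<open>The algebra G: an element is \<Sum> l_i x_i + P with P \<in> K[Y,Z] of positive degree in
  both sets of variables; represented as the pair (l, P).\<close>
type_synonym 'k gel = "(nat \<Rightarrow>\<^sub>0 'k) \<times> 'k pol"

definition Gc :: "'k::comm_ring_1 gel set" where
  "Gc = {(l, p). pos_bideg p}"

definition Ylin :: "(nat \<Rightarrow>\<^sub>0 'k) \<Rightarrow> 'k::comm_ring_1 pol" where
  "Ylin l = (\<Sum>i\<in>Poly_Mapping.keys l. constp (Poly_Mapping.lookup l i) * Yv i)"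

definition Zlin :: "(nat \<Rightarrow>\<^sub>0 'k) \<Rightarrow> 'k::comm_ring_1 pol" where
  "Zlin l = (\<Sum>i\<in>Poly_Mapping.keys l. constp (Poly_Mapping.lookup l i) * Zv i)"

definition gzero :: "'k::comm_ring_1 gel" where
  "gzero = (0, 0)"

definition gadd :: "'k::comm_ring_1 gel \<Rightarrow> 'k gel \<Rightarrow> 'k gel" where
  "gadd a b = (fst a + fst b, snd a + snd b)"

definition gsmul :: "'k::comm_ring_1 \<Rightarrow> 'k gel \<Rightarrow> 'k gel" where
  "gsmul c a = (Poly_Mapping.map (\<lambda>v. c * v) (fst a), constp c * snd a)"

text \<open>Multiplication: x_i x_j = y_i z_j, x_i P = y_i P, P x_j = P z_j, P Q = PQ, bilinearly.\<close>
definition gmul :: "'k::comm_ring_1 gel \<Rightarrow> 'k gel \<Rightarrow> 'k gel" where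
  "gmul a b = (0, Ylin (fst a) * Zlin (fst b) + Ylin (fst a) * snd b
                  + snd a * Zlin (fst b) + snd a * snd b)"

definition emb :: "'k::comm_ring_1 pol \<Rightarrow> 'k gel" where
  "emb p = (0, p)"

definition is_endo :: "('k::comm_ring_1 gel \<Rightarrow> 'k gel) \<Rightarrow> bool" where
  "is_endo \<phi> \<longleftrightarrow> (\<forall>a\<in>Gc. \<phi> a \<in> Gc)
     \<and> (\<forall>a\<in>Gc. \<forall>b\<in>Gc. \<phi> (gadd a b) = gadd (\<phi> a) (\<phi> b))
     \<and> (\<forall>c. \<forall>a\<in>Gc. \<phi> (gsmul c a) = gsmul c (\<phi> a))
     \<and> (\<forall>a\<in>Gc. \<forall>b\<in>Gc. \<phi> (gmul a b) = gmul (\<phi> a) (\<phi> b))"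

definition is_Tideal :: "'k::comm_ring_1 gel set \<Rightarrow> bool" where
  "is_Tideal I \<longleftrightarrow> I \<subseteq> Gc \<and> gzero \<in> I
     \<and> (\<forall>a\<in>I. \<forall>b\<in>I. gadd a b \<in> I)
     \<and> (\<forall>c. \<forall>a\<in>I. gsmul c a \<in> I)
     \<and> (\<forall>a\<in>I. \<forall>g\<in>Gc. gmul g a \<in> I \<and> gmul a g \<in> I)
     \<and> (\<forall>\<phi>. is_endo \<phi> \<longrightarrow> (\<forall>a\<in>I. \<phi> a \<in> I))"

definition Tideal_gen :: "'k::comm_ring_1 gel set \<Rightarrow> 'k gel set" where
  "Tideal_gen S = \<Inter>{I. is_Tideal I \<and> S \<subseteq> I}"

definition wmu :: "nat \<Rightarrow> nat \<Rightarrow> nat \<Rightarrow> 'k::comm_ring_1 pol" where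
  "wmu \<mu>1 \<mu>2 j = (if \<mu>2 = 0 then Yv 1 ^ j * Zv 1 ^ (\<mu>1 - j)
      else Yv 1 ^ j * (Yv 1 * Zv 2 - Yv 2 * Zv 1) ^ \<mu>2 * Zv 1 ^ (\<mu>1 - \<mu>2 - j))"

definition admissible :: "nat \<Rightarrow> nat \<Rightarrow> nat \<Rightarrow> bool" where
  "admissible \<mu>1 \<mu>2 j \<longleftrightarrow>
     (\<mu>2 = 0 \<and> 1 \<le> j \<and> j + 1 \<le> \<mu>1) \<or> (0 < \<mu>2 \<and> \<mu>2 \<le> \<mu>1 \<and> j \<le> \<mu>1 - \<mu>2)"

end

theory Submission
  imports Defs
begin

text \<open>The endomorphism of the free bicommutative algebra fixing every generator except
  \<open>x\<^sub>2 \<mapsto> x\<^sub>1 x\<^sub>1\<close> acts on the polynomial model as the monomial substitution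
  \<open>y\<^sub>2, z\<^sub>2 \<mapsto> y\<^sub>1 z\<^sub>1\<close>, because \<open>x\<^sub>1 x\<^sub>1 = y\<^sub>1 z\<^sub>1\<close> and \<open>x\<^sub>2\<close> contributes
  \<open>y\<^sub>2\<close> as a left and \<open>z\<^sub>2\<close> as a right factor. It sends \<open>y\<^sub>1 z\<^sub>2 - y\<^sub>2 z\<^sub>1\<close> to
  \<open>y\<^sub>1 z\<^sub>1 (y\<^sub>1 - z\<^sub>1)\<close>, so the image of the \<open>k\<close>-th power of the generator is
  \<open>(y\<^sub>1 z\<^sub>1)\<^sup>k (y\<^sub>1 - z\<^sub>1)\<^sup>k\<close>. Each \<open>w\<^sub>\<mu>\<close> lies in \<open>F(B)\<^sup>2\<close>, so multiplying
  by it stays inside the T-ideal.\<close>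

definition map_monomials :: "('a \<Rightarrow> 'b) \<Rightarrow> ('a \<Rightarrow>\<^sub>0 'k::comm_monoid_add) \<Rightarrow> ('b \<Rightarrow>\<^sub>0 'k)" where
  "map_monomials h p = (\<Sum>m\<in>Poly_Mapping.keys p. Poly_Mapping.single (h m) (Poly_Mapping.lookup p m))"

lemma map_monomials_superset:
  assumes "finite S" "Poly_Mapping.keys p \<subseteq> S"
  shows "map_monomials h p = (\<Sum>m\<in>S. Poly_Mapping.single (h m) (Poly_Mapping.lookup p m))"
  unfolding map_monomials_def
  using assms by (intro sum.mono_neutral_left) (auto simp: in_keys_iff)

lemma map_monomials_zero [simp]: "map_monomials h 0 = 0"
  by (simp add: map_monomials_def)

lemma map_monomials_single [simp]:
  "map_monomials h (Poly_Mapping.single m c) = Poly_Mapping.single (h m) c"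
  by (subst map_monomials_superset[of "{m}"]) auto

lemma map_monomials_add: "map_monomials h (p + q) = map_monomials h p + map_monomials h q"
proof -
  let ?S = "Poly_Mapping.keys p \<union> Poly_Mapping.keys q"
  have "Poly_Mapping.keys (p + q) \<subseteq> ?S"
    by (rule keys_add)
  then show ?thesis
    by (simp add: map_monomials_superset[of ?S] lookup_add single_add sum.distrib)
qed

lemma map_monomials_sum:
  "finite A \<Longrightarrow> map_monomials h (\<Sum>x\<in>A. f x) = (\<Sum>x\<in>A. map_monomials h (f x))"
  by (induction A rule: finite_induct) (simp_all add: map_monomials_add)

lemma map_monomials_uminus:
  "map_monomials h (- p :: 'a \<Rightarrow>\<^sub>0 'k::ab_group_add) = - map_monomials h p"
  using map_monomials_add[of h p "- p"] by (simp add: eq_neg_iff_add_eq_0 add.commute)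

lemma map_monomials_diff:
  "map_monomials h (p - q :: 'a \<Rightarrow>\<^sub>0 'k::ab_group_add) = map_monomials h p - map_monomials h q"
  using map_monomials_add[of h p "- q"] by (simp add: map_monomials_uminus)

lemma keys_map_monomials: "Poly_Mapping.keys (map_monomials h p) \<subseteq> h ` Poly_Mapping.keys p"
proof -
  have "Poly_Mapping.keys (map_monomials h p)
      \<subseteq> (\<Union>m\<in>Poly_Mapping.keys p. Poly_Mapping.keys (Poly_Mapping.single (h m) (Poly_Mapping.lookup p m)))"
    unfolding map_monomials_def by (rule keys_sum)
  then show ?thesis by auto
qed

lemma poly_mapping_single_expansion:
  "p = (\<Sum>m\<in>Poly_Mapping.keys p. Poly_Mapping.single m (Poly_Mapping.lookup p m))"
  by (rule poly_mapping_eqI) (simp add: lookup_sum lookup_single when_def in_keys_iff)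

context
  fixes h :: "'a::comm_monoid_add \<Rightarrow> 'b::comm_monoid_add"
  assumes h_add: "\<And>a b. h (a + b) = h a + h b" and h_zero: "h 0 = 0"
begin

lemma map_monomials_mult:
  "map_monomials h (p * q :: 'a \<Rightarrow>\<^sub>0 'k::comm_semiring_1) = map_monomials h p * map_monomials h q"
proof -
  let ?P = "Poly_Mapping.keys p" and ?Q = "Poly_Mapping.keys q"
  have "p * q = (\<Sum>a\<in>?P. \<Sum>b\<in>?Q. Poly_Mapping.single (a + b) (Poly_Mapping.lookup p a * Poly_Mapping.lookup q b))"
    by (subst (1 2) poly_mapping_single_expansion) (simp add: sum_product mult_single)
  then have "map_monomials h (p * q) = (\<Sum>a\<in>?P. \<Sum>b\<in>?Q.
      Poly_Mapping.single (h a + h b) (Poly_Mapping.lookup p a * Poly_Mapping.lookup q b))"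
    by (simp add: map_monomials_sum h_add)
  also have "\<dots> = map_monomials h p * map_monomials h q"
    by (simp add: map_monomials_def sum_product mult_single)
  finally show ?thesis .
qed

lemma map_monomials_one: "map_monomials h (1 :: 'a \<Rightarrow>\<^sub>0 'k::comm_semiring_1) = 1"
  using map_monomials_single[of h 0 "1::'k"] by (simp add: h_zero)

lemma map_monomials_power:
  "map_monomials h (p ^ n :: 'a \<Rightarrow>\<^sub>0 'k::comm_semiring_1) = map_monomials h p ^ n"
  by (induction n) (simp_all add: map_monomials_one map_monomials_mult)

end

definition monomial_subst :: "('v \<Rightarrow> 'w \<Rightarrow>\<^sub>0 nat) \<Rightarrow> ('v \<Rightarrow>\<^sub>0 nat) \<Rightarrow> ('w \<Rightarrow>\<^sub>0 nat)" where
  "monomial_subst \<sigma> m = (\<Sum>v\<in>Poly_Mapping.keys m. Poly_Mapping.map ((*) (Poly_Mapping.lookup m v)) (\<sigma> v))"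

lemma lookup_map_times:
  "Poly_Mapping.lookup (Poly_Mapping.map ((*) (c::'b::mult_zero)) p) k = c * Poly_Mapping.lookup p k"
  by (simp add: map.rep_eq when_def)

lemma lookup_monomial_subst:
  "Poly_Mapping.lookup (monomial_subst \<sigma> m) w
     = (\<Sum>v\<in>Poly_Mapping.keys m. Poly_Mapping.lookup m v * Poly_Mapping.lookup (\<sigma> v) w)"
  by (simp add: monomial_subst_def lookup_sum lookup_map_times)

lemma lookup_monomial_subst_superset:
  assumes "finite S" "Poly_Mapping.keys m \<subseteq> S"
  shows "Poly_Mapping.lookup (monomial_subst \<sigma> m) w
     = (\<Sum>v\<in>S. Poly_Mapping.lookup m v * Poly_Mapping.lookup (\<sigma> v) w)"
  unfolding lookup_monomial_subst
  using assms by (intro sum.mono_neutral_left) (auto simp: in_keys_iff)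

lemma monomial_subst_add: "monomial_subst \<sigma> (a + b) = monomial_subst \<sigma> a + monomial_subst \<sigma> b"
proof (rule poly_mapping_eqI)
  fix w
  let ?S = "Poly_Mapping.keys a \<union> Poly_Mapping.keys b"
  have "Poly_Mapping.keys (a + b) \<subseteq> ?S"
    by (rule keys_add)
  then show "Poly_Mapping.lookup (monomial_subst \<sigma> (a + b)) w
      = Poly_Mapping.lookup (monomial_subst \<sigma> a + monomial_subst \<sigma> b) w"
    by (simp add: lookup_monomial_subst_superset[of ?S] lookup_add algebra_simps sum.distrib)
qed

lemma monomial_subst_zero [simp]: "monomial_subst \<sigma> 0 = 0"
  by (simp add: monomial_subst_def)

lemma monomial_subst_var [simp]: "monomial_subst \<sigma> (Poly_Mapping.single v 1) = \<sigma> v"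
  by (rule poly_mapping_eqI) (simp add: lookup_monomial_subst)

lemma lookup_monomial_subst_ge:
  "Poly_Mapping.lookup m v * Poly_Mapping.lookup (\<sigma> v) w \<le> Poly_Mapping.lookup (monomial_subst \<sigma> m) w"
proof (cases "v \<in> Poly_Mapping.keys m")
  case True
  then show ?thesis
    unfolding lookup_monomial_subst by (intro member_le_sum) auto
qed (simp add: in_keys_iff)

definition bipositive :: "((nat + nat) \<Rightarrow>\<^sub>0 nat) \<Rightarrow> bool" where
  "bipositive m \<longleftrightarrow> (\<exists>i. 0 < Poly_Mapping.lookup m (Inl i)) \<and> (\<exists>i. 0 < Poly_Mapping.lookup m (Inr i))"

lemma pos_bideg_iff_bipositive: "pos_bideg p \<longleftrightarrow> (\<forall>m\<in>Poly_Mapping.keys p. bipositive m)"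
  by (simp add: pos_bideg_def bipositive_def)

lemma bipositive_monomial_subst:
  assumes y: "\<And>i. \<exists>j. 0 < Poly_Mapping.lookup (\<sigma> (Inl i)) (Inl j)"
    and z: "\<And>i. \<exists>j. 0 < Poly_Mapping.lookup (\<sigma> (Inr i)) (Inr j)"
    and "bipositive m"
  shows "bipositive (monomial_subst \<sigma> m)"
proof -
  have positive_at: "0 < Poly_Mapping.lookup (monomial_subst \<sigma> m) w"
    if "0 < Poly_Mapping.lookup m v" "0 < Poly_Mapping.lookup (\<sigma> v) w" for v w
    using that lookup_monomial_subst_ge[of m v \<sigma> w] by (meson nat_0_less_mult_iff order_less_le_trans)
  from \<open>bipositive m\<close> obtain i i' where "0 < Poly_Mapping.lookup m (Inl i)" "0 < Poly_Mapping.lookup m (Inr i')"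
    unfolding bipositive_def by blast
  moreover obtain j j' where "0 < Poly_Mapping.lookup (\<sigma> (Inl i)) (Inl j)" "0 < Poly_Mapping.lookup (\<sigma> (Inr i')) (Inr j')"
    using y z by blast
  ultimately show ?thesis
    unfolding bipositive_def using positive_at by blast
qed

lemma pos_bideg_map_monomials:
  assumes "\<And>m. bipositive m \<Longrightarrow> bipositive (h m)" and "pos_bideg p"
  shows "pos_bideg (map_monomials h p)"
  using assms keys_map_monomials[of h p] unfolding pos_bideg_iff_bipositive by blast

lemma pos_bideg_mult_right: "pos_bideg p \<Longrightarrow> pos_bideg (p * q)"
  unfolding pos_bideg_iff_bipositive bipositive_def
  by (fastforce dest!: set_mp[OF keys_mult] simp: lookup_add add_pos_nonneg)

lemma pos_bideg_mult_left: "pos_bideg q \<Longrightarrow> pos_bideg (p * q)"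
  using pos_bideg_mult_right[of q p] by (simp add: mult.commute)

lemma pos_bideg_add: "pos_bideg p \<Longrightarrow> pos_bideg q \<Longrightarrow> pos_bideg (p + q)"
  unfolding pos_bideg_def using keys_add[of p q] by blast

lemma pos_bideg_diff: "pos_bideg p \<Longrightarrow> pos_bideg q \<Longrightarrow> pos_bideg (p - q)"
  unfolding pos_bideg_def using keys_diff[of p q] by blast

lemma pos_bideg_single: "bipositive u \<Longrightarrow> pos_bideg (Poly_Mapping.single u c)"
  by (simp add: pos_bideg_iff_bipositive)

lemma Yv_mult_Zv:
  "Yv i * Zv j = (Poly_Mapping.single (Poly_Mapping.single (Inl i) 1 + Poly_Mapping.single (Inr j) 1) 1 :: 'k::comm_ring_1 pol)"
  by (simp add: Yv_def Zv_def mult_single)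

lemma bipositive_yz: "bipositive (Poly_Mapping.single (Inl i) 1 + Poly_Mapping.single (Inr j) 1)"
proof -
  have "0 < Poly_Mapping.lookup (Poly_Mapping.single (Inl i) 1 + Poly_Mapping.single (Inr j) (1::nat)) (Inl i)"
    and "0 < Poly_Mapping.lookup (Poly_Mapping.single (Inl i) 1 + Poly_Mapping.single (Inr j) (1::nat)) (Inr j)"
    by (simp_all add: lookup_add)
  then show ?thesis unfolding bipositive_def by blast
qed

lemma pos_bideg_Yv_mult_Zv: "pos_bideg (Yv i * Zv j :: 'k::comm_ring_1 pol)"
  unfolding Yv_mult_Zv by (rule pos_bideg_single[OF bipositive_yz])

lemma constp_zero [simp]: "constp 0 = 0"
  by (simp add: constp_def)

lemma constp_add: "constp (a + b) = constp a + constp b"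
  by (simp add: constp_def single_add)

lemma constp_mult: "constp (a * b) = constp a * constp b"
  by (simp add: constp_def mult_single)

definition var_subst :: "nat \<Rightarrow> ((nat + nat) \<Rightarrow>\<^sub>0 nat) \<Rightarrow> nat + nat \<Rightarrow> ((nat + nat) \<Rightarrow>\<^sub>0 nat)" where
  "var_subst n u v = (if v = Inl n \<or> v = Inr n then u else Poly_Mapping.single v 1)"

definition subst_yz :: "nat \<Rightarrow> ((nat + nat) \<Rightarrow>\<^sub>0 nat) \<Rightarrow> 'k::comm_ring_1 pol \<Rightarrow> 'k pol" where
  "subst_yz n u = map_monomials (monomial_subst (var_subst n u))"

lemma subst_yz_add: "subst_yz n u (p + q) = subst_yz n u p + subst_yz n u q"
  by (simp add: subst_yz_def map_monomials_add)

lemma subst_yz_diff: "subst_yz n u (p - q) = subst_yz n u p - subst_yz n u q"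
  by (simp add: subst_yz_def map_monomials_diff)

lemma subst_yz_sum: "finite A \<Longrightarrow> subst_yz n u (\<Sum>x\<in>A. f x) = (\<Sum>x\<in>A. subst_yz n u (f x))"
  by (simp add: subst_yz_def map_monomials_sum)

lemma subst_yz_mult: "subst_yz n u (p * q) = subst_yz n u p * subst_yz n u q"
  by (simp add: subst_yz_def map_monomials_mult monomial_subst_add)

lemma subst_yz_power: "subst_yz n u (p ^ k) = subst_yz n u p ^ k"
  by (simp add: subst_yz_def map_monomials_power monomial_subst_add)

lemma subst_yz_constp_mult: "subst_yz n u (constp c * p) = constp c * subst_yz n u p"
  by (simp add: subst_yz_mult) (simp add: subst_yz_def constp_def)

lemma subst_yz_Yv: "subst_yz n u (Yv i) = (if i = n then Poly_Mapping.single u 1 else Yv i)"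
  by (simp add: subst_yz_def Yv_def var_subst_def del: One_nat_def)

lemma subst_yz_Zv: "subst_yz n u (Zv i) = (if i = n then Poly_Mapping.single u 1 else Zv i)"
  by (simp add: subst_yz_def Zv_def var_subst_def del: One_nat_def)

lemma pos_bideg_subst_yz:
  assumes "bipositive u" and "pos_bideg p"
  shows "pos_bideg (subst_yz n u p)"
proof -
  have "\<exists>j. 0 < Poly_Mapping.lookup (var_subst n u (Inl i)) (Inl j)"
    and "\<exists>j. 0 < Poly_Mapping.lookup (var_subst n u (Inr i)) (Inr j)" for i
    using \<open>bipositive u\<close> by (auto simp: var_subst_def bipositive_def intro: exI[of _ i])
  then show ?thesis
    unfolding subst_yz_def
    by (intro pos_bideg_map_monomials[OF _ \<open>pos_bideg p\<close>] bipositive_monomial_subst)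
qed

lemma subst_yz_linear_combination:
  assumes V: "\<And>i. subst_yz n u (V i) = (if i = n then Poly_Mapping.single u 1 else V i)"
  shows "subst_yz n u (\<Sum>i\<in>Poly_Mapping.keys l. constp (Poly_Mapping.lookup l i) * V i)
    = (\<Sum>i\<in>Poly_Mapping.keys (Poly_Mapping.update n 0 l). constp (Poly_Mapping.lookup (Poly_Mapping.update n 0 l) i) * V i)
      + constp (Poly_Mapping.lookup l n) * Poly_Mapping.single u 1"
proof -
  have keys_upd: "Poly_Mapping.keys (Poly_Mapping.update n 0 l) = Poly_Mapping.keys l - {n}"
    by (simp add: keys_update)
  have "subst_yz n u (\<Sum>i\<in>Poly_Mapping.keys l. constp (Poly_Mapping.lookup l i) * V i)
      = (\<Sum>i\<in>Poly_Mapping.keys l. constp (Poly_Mapping.lookup l i) * (if i = n then Poly_Mapping.single u 1 else V i))"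
    by (simp add: subst_yz_sum subst_yz_constp_mult V)
  also have "\<dots> = (\<Sum>i\<in>Poly_Mapping.keys l - {n}. constp (Poly_Mapping.lookup l i) * V i)
      + constp (Poly_Mapping.lookup l n) * Poly_Mapping.single u 1"
  proof (cases "n \<in> Poly_Mapping.keys l")
    case True
    then show ?thesis
      by (auto simp: sum.remove[OF finite_keys True] add.commute intro!: sum.cong)
  next
    case False
    then show ?thesis
      by (auto simp: in_keys_iff intro!: sum.cong)
  qed
  finally show ?thesis
    by (auto simp: keys_upd lookup_update intro!: sum.cong)
qed

lemma subst_yz_Ylin:
  "subst_yz n u (Ylin l) = Ylin (Poly_Mapping.update n 0 l) + constp (Poly_Mapping.lookup l n) * Poly_Mapping.single u 1"
  unfolding Ylin_def by (rule subst_yz_linear_combination[OF subst_yz_Yv])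

lemma subst_yz_Zlin:
  "subst_yz n u (Zlin l) = Zlin (Poly_Mapping.update n 0 l) + constp (Poly_Mapping.lookup l n) * Poly_Mapping.single u 1"
  unfolding Zlin_def by (rule subst_yz_linear_combination[OF subst_yz_Zv])

lemma update_zero_zero [simp]: "Poly_Mapping.update n 0 0 = (0 :: 'a \<Rightarrow>\<^sub>0 'b::zero)"
  by (rule poly_mapping_eqI) (simp add: lookup_update)

lemma update_zero_add:
  "Poly_Mapping.update n 0 (a + b) = Poly_Mapping.update n 0 a + Poly_Mapping.update n (0::'b::monoid_add) b"
  by (rule poly_mapping_eqI) (simp add: lookup_update lookup_add)

lemma update_map_times:
  "Poly_Mapping.update n 0 (Poly_Mapping.map ((*) c) l) = Poly_Mapping.map ((*) (c::'k::mult_zero)) (Poly_Mapping.update n 0 l)"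
  by (rule poly_mapping_eqI) (simp add: lookup_update lookup_map_times)

text \<open>The endomorphism of \<open>G\<close> fixing \<open>x\<^sub>i\<close> for \<open>i \<noteq> n\<close> and sending \<open>x\<^sub>n\<close> to the
  monomial \<open>u\<close>; on the polynomial part both \<open>y\<^sub>n\<close> and \<open>z\<^sub>n\<close> become \<open>u\<close>.\<close>

definition gen_subst :: "nat \<Rightarrow> ((nat + nat) \<Rightarrow>\<^sub>0 nat) \<Rightarrow> 'k::comm_ring_1 gel \<Rightarrow> 'k gel" where
  "gen_subst n u a = (Poly_Mapping.update n 0 (fst a),
     constp (Poly_Mapping.lookup (fst a) n) * Poly_Mapping.single u 1 + subst_yz n u (snd a))"

lemma is_endo_gen_subst:
  assumes "bipositive u"
  shows "is_endo (gen_subst n u :: 'k::comm_ring_1 gel \<Rightarrow> 'k gel)"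
  unfolding is_endo_def
proof (intro conjI ballI allI)
  fix a :: "'k gel"
  assume "a \<in> Gc"
  then show "gen_subst n u a \<in> Gc"
    using assms by (auto simp: Gc_def gen_subst_def
        intro!: pos_bideg_add pos_bideg_subst_yz pos_bideg_mult_left pos_bideg_single)
next
  fix a b :: "'k gel"
  show "gen_subst n u (gadd a b) = gadd (gen_subst n u a) (gen_subst n u b)"
    by (simp add: gen_subst_def gadd_def update_zero_add lookup_add constp_add subst_yz_add
        algebra_simps)
next
  fix c and a :: "'k gel"
  show "gen_subst n u (gsmul c a) = gsmul c (gen_subst n u a)"
    by (simp add: gen_subst_def gsmul_def update_map_times lookup_map_times constp_mult
        subst_yz_constp_mult distrib_left mult.assoc)
next
  fix a b :: "'k gel"
  show "gen_subst n u (gmul a b) = gmul (gen_subst n u a) (gen_subst n u b)"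
    by (simp add: gen_subst_def gmul_def subst_yz_add subst_yz_mult subst_yz_Ylin subst_yz_Zlin
        algebra_simps)
qed

lemma gen_subst_emb: "gen_subst n u (emb p) = emb (subst_yz n u p)"
  by (simp add: gen_subst_def emb_def)

lemma generators_subset_Tideal_gen: "S \<subseteq> Tideal_gen S"
  by (auto simp: Tideal_gen_def)

lemma Tideal_gen_endo: "is_endo \<phi> \<Longrightarrow> a \<in> Tideal_gen S \<Longrightarrow> \<phi> a \<in> Tideal_gen S"
  unfolding Tideal_gen_def is_Tideal_def by blast

lemma Tideal_gen_mult_right: "a \<in> Tideal_gen S \<Longrightarrow> g \<in> Gc \<Longrightarrow> gmul a g \<in> Tideal_gen S"
  unfolding Tideal_gen_def is_Tideal_def by blast

lemma emb_in_Gc: "emb p \<in> Gc \<longleftrightarrow> pos_bideg p"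
  by (simp add: emb_def Gc_def)

lemma gmul_emb: "gmul (emb p) (emb q) = emb (p * q)"
  by (simp add: gmul_def emb_def Ylin_def Zlin_def)

lemma subst_yz_det_power:
  "subst_yz 2 (Poly_Mapping.single (Inl 1) 1 + Poly_Mapping.single (Inr 1) 1) ((Yv 1 * Zv 2 - Yv 2 * Zv 1) ^ k)
     = (Yv 1 * Zv 1) ^ k * (Yv 1 - Zv 1 :: 'k::comm_ring_1 pol) ^ k"
proof -
  have "subst_yz 2 (Poly_Mapping.single (Inl 1) 1 + Poly_Mapping.single (Inr 1) 1) (Yv 1 * Zv 2 - Yv 2 * Zv 1)
      = Yv 1 * (Yv 1 * Zv 1) - (Yv 1 * Zv 1) * (Zv 1 :: 'k pol)"
    by (simp add: subst_yz_diff subst_yz_mult subst_yz_Yv subst_yz_Zv del: One_nat_def)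
      (simp add: Yv_mult_Zv del: One_nat_def)
  also have "\<dots> = (Yv 1 * Zv 1) * (Yv 1 - Zv 1)"
    by (simp add: algebra_simps)
  finally show ?thesis
    by (simp add: subst_yz_power power_mult_distrib del: One_nat_def)
qed

lemma pos_bideg_det_power: "0 < k \<Longrightarrow> pos_bideg ((Yv 1 * Zv 2 - Yv 2 * Zv 1 :: 'k::comm_ring_1 pol) ^ k)"
  by (cases k) (simp_all add: pos_bideg_mult_right pos_bideg_diff pos_bideg_Yv_mult_Zv)

lemma pos_bideg_wmu: "admissible \<mu>1 \<mu>2 j \<Longrightarrow> pos_bideg (wmu \<mu>1 \<mu>2 j :: 'k::comm_ring_1 pol)"
proof (cases "\<mu>2 = 0")
  case True
  assume "admissible \<mu>1 \<mu>2 j"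
  with True have "0 < j" "0 < \<mu>1 - j"
    unfolding admissible_def by auto
  then obtain a b where "j = Suc a" "\<mu>1 - j = Suc b"
    using gr0_implies_Suc by blast
  then have "wmu \<mu>1 \<mu>2 j = Yv 1 * Zv 1 * (Yv 1 ^ a * Zv 1 ^ b :: 'k pol)"
    using True by (simp add: wmu_def algebra_simps)
  then show ?thesis
    by (simp add: pos_bideg_mult_right pos_bideg_Yv_mult_Zv)
next
  case False
  then have "wmu \<mu>1 \<mu>2 j = (Yv 1 * Zv 2 - Yv 2 * Zv 1) ^ \<mu>2 * (Yv 1 ^ j * Zv 1 ^ (\<mu>1 - \<mu>2 - j) :: 'k pol)"
    by (simp add: wmu_def algebra_simps)
  moreover have "pos_bideg ((Yv 1 * Zv 2 - Yv 2 * Zv 1) ^ \<mu>2 :: 'k pol)"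
    using False by (intro pos_bideg_det_power) simp
  ultimately show ?thesis
    by (simp only: pos_bideg_mult_right)
qed

theorem lemma4p4:
  fixes k :: nat
  assumes "1 \<le> k"
  shows "emb ((Yv 1 * Zv 1) ^ k * (Yv 1 - Zv 1) ^ k)
           \<in> Tideal_gen {emb ((Yv 1 * Zv 2 - Yv 2 * Zv 1) ^ k) :: 'k::field_char_0 gel}
         \<and> (\<forall>\<mu>1 \<mu>2 j. admissible \<mu>1 \<mu>2 j \<longrightarrow>
           emb ((Yv 1 * Zv 1) ^ k * (Yv 1 - Zv 1) ^ k * wmu \<mu>1 \<mu>2 j)
             \<in> Tideal_gen {emb ((Yv 1 * Zv 2 - Yv 2 * Zv 1) ^ k) :: 'k::field_char_0 gel})"
proof -
  let ?I = "Tideal_gen {emb ((Yv 1 * Zv 2 - Yv 2 * Zv 1) ^ k) :: 'k gel}"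
  let ?u = "Poly_Mapping.single (Inl 1) 1 + Poly_Mapping.single (Inr 1) 1" \<comment> \<open>\<open>y\<^sub>1 z\<^sub>1 = x\<^sub>1 x\<^sub>1\<close>\<close>
  have "gen_subst 2 ?u (emb ((Yv 1 * Zv 2 - Yv 2 * Zv 1) ^ k)) \<in> ?I"
    using Tideal_gen_endo[OF is_endo_gen_subst[OF bipositive_yz]] generators_subset_Tideal_gen by blast
  then have image: "emb ((Yv 1 * Zv 1) ^ k * (Yv 1 - Zv 1) ^ k) \<in> ?I"
    by (simp add: gen_subst_emb subst_yz_det_power del: One_nat_def)
  have "emb ((Yv 1 * Zv 1) ^ k * (Yv 1 - Zv 1) ^ k * wmu \<mu>1 \<mu>2 j) \<in> ?I"
    if "admissible \<mu>1 \<mu>2 j" for \<mu>1 \<mu>2 j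
    using Tideal_gen_mult_right[OF image, of "emb (wmu \<mu>1 \<mu>2 j)"] pos_bideg_wmu[OF that]
    by (simp add: emb_in_Gc gmul_emb)
  with image show ?thesis
    by blast
qed

end
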